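(* Let $x\in\mathbb R^N$ with block structure $\mathcal B=(\mathcal B_1,\dots,\mathcal B_B)$, weights $\omega_b\ge1$, $0<p\le 2$, and a block norm $\|\cdot\|_q$. For every $s\ge\|\omega\|_\infty^2$, $$\widetilde\sigma_{3s}(x)_{q,p}^{(\omega)}\le\sigma_s(x)_{q,p}^{(\omega)}.$$
   Context: Block structure: $\mathcal B=(\mathcal B_1,\dots,\mathcal B_B)$ is a partition of $\{1,\dots,N\}$; for $x\in\mathbb R^N$, $x[b]=x[\mathcal B_b]$; for $S\subseteq\{1,\dots,B\}$, $x[S]$ equals $x$ on blocks in $S$ and $0$ elsewhere. Weights $\omega_b\ge1$, $\|\omega\|_\infty=\max_b\omega_b$, $\omega(S)=\sum_{b\in S}\omega_b^2$. $\|x\|_{q,p}^{(\omega)}=\big(\sum_b\omega_b^{2-p}\|x[b]\|_q^p\big)^{1/p}$. $\|x\|_0^{(\omega)}=\omega(\{b:x[b]\ne0\})$. $\sigma_s(x)_{q,p}^{(\omega)}=\inf\{\|x-z\|_{q,p}^{(\omega)}:\|z\|_0^{(\omega)}\le s\}$. Quasi-best approximation: let $\pi$ be a permutation of $\{1,\dots,B\}$ with $\|x[\pi(i)]\|_q/\omega_{\pi(i)}$ nonincreasing in $i$; for $t\ge\|\omega\|_\infty^2$ let $k_t=\max\{k:\sum_{i=1}^k\omega_{\pi(i)}^2\le t\}$, $S_t=\{\pi(1),\dots,\pi(k_t)\}$ and $\widetilde\sigma_t(x)_{q,p}^{(\omega)}=\|x-x[S_t]\|_{q,p}^{(\omega)}$.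 *)

theory Defs
  imports "HOL-Analysis.Analysis"
begin

text \<open>Coordinates are indexed by 1..N, blocks by 1..nB. Vectors are functions nat => real; only
  coordinates in 1..N matter.\<close>

definition is_block_partition :: "nat \<Rightarrow> nat \<Rightarrow> (nat \<Rightarrow> nat set) \<Rightarrow> bool" where
  "is_block_partition N nB Bl \<longleftrightarrow>
     (\<forall>b\<in>{1..nB}. Bl b \<noteq> {} \<and> Bl b \<subseteq> {1..N}) \<and>
     (\<forall>b\<in>{1..nB}. \<forall>b'\<in>{1..nB}. b \<noteq> b' \<longrightarrow> Bl b \<inter> Bl b' = {}) \<and>
     (\<Union>b\<in>{1..nB}. Bl b) = {1..N}"

definition blk_qnorm :: "ereal \<Rightarrow> (nat \<Rightarrow> real) \<Rightarrow> nat set \<Rightarrow> real" where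
  "blk_qnorm q x I =
     (if q = \<infinity> then Max ((\<lambda>i. \<bar>x i\<bar>) ` I)
      else (\<Sum>i\<in>I. \<bar>x i\<bar> powr real_of_ereal q) powr (1 / real_of_ereal q))"

definition wnorm :: "(nat \<Rightarrow> nat set) \<Rightarrow> nat \<Rightarrow> (nat \<Rightarrow> real) \<Rightarrow> ereal \<Rightarrow> real
                      \<Rightarrow> (nat \<Rightarrow> real) \<Rightarrow> real" where
  "wnorm Bl nB \<omega> q p x =
     (\<Sum>b\<in>{1..nB}. \<omega> b powr (2 - p) * blk_qnorm q x (Bl b) powr p) powr (1 / p)"

definition wsize :: "(nat \<Rightarrow> real) \<Rightarrow> nat set \<Rightarrow> real" where
  "wsize \<omega> S = (\<Sum>b\<in>S. (\<omega> b)\<^sup>2)"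

definition bsupp :: "(nat \<Rightarrow> nat set) \<Rightarrow> nat \<Rightarrow> (nat \<Rightarrow> real) \<Rightarrow> nat set" where
  "bsupp Bl nB z = {b\<in>{1..nB}. \<exists>i\<in>Bl b. z i \<noteq> 0}"

definition w0 :: "(nat \<Rightarrow> nat set) \<Rightarrow> nat \<Rightarrow> (nat \<Rightarrow> real) \<Rightarrow> (nat \<Rightarrow> real) \<Rightarrow> real" where
  "w0 Bl nB \<omega> z = wsize \<omega> (bsupp Bl nB z)"

definition sigma_best :: "(nat \<Rightarrow> nat set) \<Rightarrow> nat \<Rightarrow> (nat \<Rightarrow> real) \<Rightarrow> ereal \<Rightarrow> real
                           \<Rightarrow> real \<Rightarrow> (nat \<Rightarrow> real) \<Rightarrow> real" where
  "sigma_best Bl nB \<omega> q p s x =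
     Inf {wnorm Bl nB \<omega> q p (\<lambda>i. x i - z i) | z. w0 Bl nB \<omega> z \<le> s}"

definition restr :: "(nat \<Rightarrow> nat set) \<Rightarrow> nat set \<Rightarrow> (nat \<Rightarrow> real) \<Rightarrow> nat \<Rightarrow> real" where
  "restr Bl S x = (\<lambda>i. if \<exists>b\<in>S. i \<in> Bl b then x i else 0)"

definition sorting_perm :: "(nat \<Rightarrow> nat set) \<Rightarrow> nat \<Rightarrow> (nat \<Rightarrow> real) \<Rightarrow> ereal
                             \<Rightarrow> (nat \<Rightarrow> real) \<Rightarrow> (nat \<Rightarrow> nat) \<Rightarrow> bool" where
  "sorting_perm Bl nB \<omega> q x \<pi> \<longleftrightarrow>
     bij_betw \<pi> {1..nB} {1..nB} \<and>
     (\<forall>i j. 1 \<le> i \<longrightarrow> i \<le> j \<longrightarrow> j \<le> nB \<longrightarrow>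
        blk_qnorm q x (Bl (\<pi> j)) / \<omega> (\<pi> j) \<le> blk_qnorm q x (Bl (\<pi> i)) / \<omega> (\<pi> i))"

definition k_t :: "nat \<Rightarrow> (nat \<Rightarrow> real) \<Rightarrow> (nat \<Rightarrow> nat) \<Rightarrow> real \<Rightarrow> nat" where
  "k_t nB \<omega> \<pi> t = Max {k \<in> {0..nB}. (\<Sum>i=1..k. (\<omega> (\<pi> i))\<^sup>2) \<le> t}"

definition S_t :: "nat \<Rightarrow> (nat \<Rightarrow> real) \<Rightarrow> (nat \<Rightarrow> nat) \<Rightarrow> real \<Rightarrow> nat set" where
  "S_t nB \<omega> \<pi> t = \<pi> ` {1..k_t nB \<omega> \<pi> t}"

definition sigma_qb :: "(nat \<Rightarrow> nat set) \<Rightarrow> nat \<Rightarrow> (nat \<Rightarrow> real) \<Rightarrow> ereal \<Rightarrow> real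
                         \<Rightarrow> (nat \<Rightarrow> nat) \<Rightarrow> real \<Rightarrow> (nat \<Rightarrow> real) \<Rightarrow> real" where
  "sigma_qb Bl nB \<omega> q p \<pi> t x =
     wnorm Bl nB \<omega> q p (\<lambda>i. x i - restr Bl (S_t nB \<omega> \<pi> t) x i)"

definition winf :: "nat \<Rightarrow> (nat \<Rightarrow> real) \<Rightarrow> real" where
  "winf nB \<omega> = Max (\<omega> ` {1..nB})"

end

theory Submission
  imports Defs
begin

text \<open>Write the p-th power of the weighted norm as the sum of w_b^2 r_b over the blocks, with
  densities r_b = (|x[b]|_q / w_b)^p; the quasi-best set S of budget 3s keeps the blocks of largest
  density. If S is not everything, its weight exceeds 3s - |w|_inf^2 >= 2s, so for any support T of
  weight at most s the blocks of S missed by T weigh at least as much as T. Exchanging the blocks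
  of T outside S (density at most the threshold) for those blocks (density at least the threshold)
  shows that the tail outside S is no larger than the tail outside T.\<close>

lemma sum_tail_le_exchange:
  fixes c r :: "'a \<Rightarrow> real"
  assumes "finite U" "S \<subseteq> U" "T \<subseteq> U" "\<tau> \<ge> 0"
    and above: "\<And>b. b \<in> S \<Longrightarrow> \<tau> \<le> r b"
    and below: "\<And>b. b \<in> U - S \<Longrightarrow> r b \<le> \<tau>"
    and c_nonneg: "\<And>b. b \<in> U \<Longrightarrow> c b \<ge> 0"
    and weight: "sum c T \<le> sum c (S - T)"
  shows "(\<Sum>b\<in>U - S. c b * r b) \<le> (\<Sum>b\<in>U - T. c b * r b)"
proof -
  have "(\<Sum>b\<in>(U - S) \<inter> T. c b * r b) \<le> (\<Sum>b\<in>(U - S) \<inter> T. c b * \<tau>)"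
    using assms by (intro sum_mono mult_left_mono) auto
  also have "\<dots> \<le> sum c T * \<tau>"
    unfolding sum_distrib_right[symmetric] using assms
    by (intro mult_right_mono sum_mono2) (auto intro: finite_subset)
  also have "\<dots> \<le> sum c (S - T) * \<tau>"
    using weight \<open>\<tau> \<ge> 0\<close> by (rule mult_right_mono)
  also have "\<dots> \<le> (\<Sum>b\<in>S - T. c b * r b)"
    unfolding sum_distrib_right using assms by (intro sum_mono mult_left_mono) auto
  finally have "(\<Sum>b\<in>(U - S) \<inter> T. c b * r b) \<le> (\<Sum>b\<in>S - T. c b * r b)" .
  moreover have "(\<Sum>b\<in>U - S. c b * r b)
      = (\<Sum>b\<in>(U - S) - T. c b * r b) + (\<Sum>b\<in>(U - S) \<inter> T. c b * r b)"
    using \<open>finite U\<close> by (simp add: sum.Int_Diff[of "U - S" _ T])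
  moreover have "(\<Sum>b\<in>U - T. c b * r b)
      = (\<Sum>b\<in>(U - S) - T. c b * r b) + (\<Sum>b\<in>S - T. c b * r b)"
  proof -
    have "U - T = ((U - S) - T) \<union> (S - T)" "((U - S) - T) \<inter> (S - T) = {}"
      using \<open>S \<subseteq> U\<close> by auto
    moreover have "finite S" using \<open>S \<subseteq> U\<close> \<open>finite U\<close> by (rule finite_subset)
    ultimately show ?thesis using \<open>finite U\<close> by (simp add: sum.union_disjoint)
  qed
  ultimately show ?thesis by linarith
qed

lemma powr_weight_eq:
  fixes w n p :: real
  assumes "w > 0" "n \<ge> 0"
  shows "w powr (2 - p) * n powr p = w\<^sup>2 * (n / w) powr p"
  using assms by (simp add: powr_diff powr_divide)

lemma blk_qnorm_cong:
  assumes "\<And>i. i \<in> I \<Longrightarrow> f i = g i"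
  shows "blk_qnorm q f I = blk_qnorm q g I"
  using assms unfolding blk_qnorm_def by (simp cong: image_cong sum.cong)

lemma blk_qnorm_zero:
  assumes "I \<noteq> {}" "1 \<le> q"
  shows "blk_qnorm q (\<lambda>i. 0) I = 0"
proof (cases "q = \<infinity>")
  case True
  moreover have "(\<lambda>i. \<bar>0::real\<bar>) ` I = {0}" using assms by auto
  ultimately show ?thesis unfolding blk_qnorm_def by simp
next
  case False
  then have "real_of_ereal q \<noteq> 0" using assms by (cases q) auto
  then show ?thesis using False unfolding blk_qnorm_def by simp
qed

lemma blk_qnorm_nonneg:
  assumes "finite I" "I \<noteq> {}"
  shows "blk_qnorm q f I \<ge> 0"
proof (cases "q = \<infinity>")
  case True
  obtain i where "i \<in> I" using assms by auto
  then have "\<bar>f i\<bar> \<le> Max ((\<lambda>i. \<bar>f i\<bar>) ` I)" using assms by (intro Max_ge) auto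
  then show ?thesis using True unfolding blk_qnorm_def by simp
qed (simp add: blk_qnorm_def)

lemma block_partition_blockD:
  assumes "is_block_partition N nB Bl" "b \<in> {1..nB}"
  shows "finite (Bl b)" "Bl b \<noteq> {}"
proof -
  have "Bl b \<subseteq> {1..N}" "Bl b \<noteq> {}" using assms unfolding is_block_partition_def by auto
  then show "finite (Bl b)" "Bl b \<noteq> {}" by (auto intro: finite_subset)
qed

lemma wsize_le_diff_add:
  assumes "finite S" "finite T"
  shows "wsize \<omega> S \<le> wsize \<omega> (S - T) + wsize \<omega> T"
proof -
  have "wsize \<omega> S = wsize \<omega> (S - T) + wsize \<omega> (S \<inter> T)"
    unfolding wsize_def using assms(1) by (simp add: sum.Int_Diff[of S _ T] add.commute)
  moreover have "wsize \<omega> (S \<inter> T) \<le> wsize \<omega> T"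
    unfolding wsize_def using assms(2) by (intro sum_mono2) auto
  ultimately show ?thesis by simp
qed

lemma k_t_spec:
  assumes "t \<ge> 0"
  shows k_t_le: "k_t nB \<omega> \<pi> t \<le> nB"
    and k_t_maximal: "k_t nB \<omega> \<pi> t < nB \<Longrightarrow> t < (\<Sum>i=1..Suc (k_t nB \<omega> \<pi> t). (\<omega> (\<pi> i))\<^sup>2)"
proof -
  define K where "K = {k \<in> {0..nB}. (\<Sum>i=1..k. (\<omega> (\<pi> i))\<^sup>2) \<le> t}"
  have "finite K" "0 \<in> K" using assms unfolding K_def by auto
  then have "k_t nB \<omega> \<pi> t \<in> K" "\<And>k. k \<in> K \<Longrightarrow> k \<le> k_t nB \<omega> \<pi> t"
    unfolding k_t_def K_def[symmetric] by (auto intro: Max_in)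
  then show "k_t nB \<omega> \<pi> t \<le> nB"
    and "k_t nB \<omega> \<pi> t < nB \<Longrightarrow> t < (\<Sum>i=1..Suc (k_t nB \<omega> \<pi> t). (\<omega> (\<pi> i))\<^sup>2)"
    unfolding K_def by (auto simp del: sum.cl_ivl_Suc) (meson Suc_leI Suc_n_not_le_n not_le)
qed

lemma S_t_subset:
  assumes "bij_betw \<pi> {1..nB} {1..nB}" "t \<ge> 0"
  shows "S_t nB \<omega> \<pi> t \<subseteq> {1..nB}"
  using assms k_t_le[OF \<open>t \<ge> 0\<close>, of nB \<omega> \<pi>] unfolding S_t_def bij_betw_def by auto

lemma wsize_S_t:
  assumes "bij_betw \<pi> {1..nB} {1..nB}" "t \<ge> 0"
  shows "wsize \<omega> (S_t nB \<omega> \<pi> t) = (\<Sum>i=1..k_t nB \<omega> \<pi> t. (\<omega> (\<pi> i))\<^sup>2)"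
proof -
  have "inj_on \<pi> {1..k_t nB \<omega> \<pi> t}"
    using assms k_t_le[OF \<open>t \<ge> 0\<close>, of nB \<omega> \<pi>] unfolding bij_betw_def
    by (auto intro: inj_on_subset)
  then show ?thesis unfolding wsize_def S_t_def by (simp add: sum.reindex)
qed

lemma wsize_S_t_gt:
  assumes "bij_betw \<pi> {1..nB} {1..nB}" "t \<ge> 0" "\<forall>b\<in>{1..nB}. \<omega> b \<ge> 0"
    and "k_t nB \<omega> \<pi> t < nB"
  shows "t - (winf nB \<omega>)\<^sup>2 < wsize \<omega> (S_t nB \<omega> \<pi> t)"
proof -
  let ?k = "k_t nB \<omega> \<pi> t"
  have "\<pi> (Suc ?k) \<in> {1..nB}" using assms unfolding bij_betw_def by auto
  then have "(\<omega> (\<pi> (Suc ?k)))\<^sup>2 \<le> (winf nB \<omega>)\<^sup>2"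
    using assms(3) unfolding winf_def by (intro power_mono Max_ge) auto
  then show ?thesis
    using k_t_maximal[OF assms(2,4)] wsize_S_t[OF assms(1,2)] by simp
qed

lemma sorting_perm_threshold:
  assumes "sorting_perm Bl nB \<omega> q x \<pi>" "k < nB"
  defines "ratio b \<equiv> blk_qnorm q x (Bl b) / \<omega> b"
  shows "\<And>b. b \<in> \<pi> ` {1..k} \<Longrightarrow> ratio (\<pi> (Suc k)) \<le> ratio b"
    and "\<And>b. b \<in> {1..nB} - \<pi> ` {1..k} \<Longrightarrow> ratio b \<le> ratio (\<pi> (Suc k))"
proof -
  have bij: "bij_betw \<pi> {1..nB} {1..nB}"
    and sorted: "\<And>i j. 1 \<le> i \<Longrightarrow> i \<le> j \<Longrightarrow> j \<le> nB \<Longrightarrow> ratio (\<pi> j) \<le> ratio (\<pi> i)"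
    using assms(1) unfolding sorting_perm_def ratio_def by auto
  show "ratio (\<pi> (Suc k)) \<le> ratio b" if "b \<in> \<pi> ` {1..k}" for b
    using that sorted \<open>k < nB\<close> by auto
  show "ratio b \<le> ratio (\<pi> (Suc k))" if b: "b \<in> {1..nB} - \<pi> ` {1..k}" for b
  proof -
    have "b \<in> \<pi> ` {1..nB}" using b bij unfolding bij_betw_def by simp
    then obtain i where "i \<in> {1..nB}" "b = \<pi> i" by blast
    then show ?thesis using b sorted[of "Suc k" i] by force
  qed
qed

lemma wnorm_diff_restr:
  assumes "is_block_partition N nB Bl" "1 \<le> q" "S \<subseteq> {1..nB}"
  shows "wnorm Bl nB \<omega> q p (\<lambda>i. x i - restr Bl S x i)
       = (\<Sum>b\<in>{1..nB} - S. \<omega> b powr (2 - p) * blk_qnorm q x (Bl b) powr p) powr (1 / p)"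
proof -
  let ?f = "\<lambda>b. \<omega> b powr (2 - p) * blk_qnorm q (\<lambda>i. x i - restr Bl S x i) (Bl b) powr p"
  have zero_on_S: "blk_qnorm q (\<lambda>i. x i - restr Bl S x i) (Bl b) = 0" if "b \<in> S" for b
  proof -
    have "blk_qnorm q (\<lambda>i. x i - restr Bl S x i) (Bl b) = blk_qnorm q (\<lambda>i. 0) (Bl b)"
      using that by (intro blk_qnorm_cong) (auto simp: restr_def)
    also have "\<dots> = 0"
      using block_partition_blockD(2)[OF assms(1)] that assms(2,3) by (intro blk_qnorm_zero) auto
    finally show ?thesis .
  qed
  have on_S: "?f b = 0" if "b \<in> S" for b using zero_on_S[OF that] by simp
  have "blk_qnorm q (\<lambda>i. x i - restr Bl S x i) (Bl b) = blk_qnorm q x (Bl b)"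
    if "b \<in> {1..nB} - S" for b
  proof (intro blk_qnorm_cong)
    fix i assume "i \<in> Bl b"
    have "i \<notin> Bl b'" if "b' \<in> S" for b'
    proof -
      have "b' \<noteq> b" "b \<in> {1..nB}" "b' \<in> {1..nB}"
        using \<open>b \<in> {1..nB} - S\<close> that assms(3) by auto
      then have "Bl b \<inter> Bl b' = {}"
        using assms(1) unfolding is_block_partition_def by blast
      then show ?thesis using \<open>i \<in> Bl b\<close> by blast
    qed
    then show "x i - restr Bl S x i = x i" by (auto simp: restr_def)
  qed
  then have "sum ?f {1..nB} = (\<Sum>b\<in>{1..nB} - S. \<omega> b powr (2 - p) * blk_qnorm q x (Bl b) powr p)"
    using sum.subset_diff[of S "{1..nB}" ?f] assms(3) on_S by simp
  then show ?thesis unfolding wnorm_def by simp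
qed

lemma wnorm_diff_ge_tail:
  assumes "p > 0"
  shows "(\<Sum>b\<in>{1..nB} - bsupp Bl nB z. \<omega> b powr (2 - p) * blk_qnorm q x (Bl b) powr p) powr (1 / p)
       \<le> wnorm Bl nB \<omega> q p (\<lambda>i. x i - z i)"
proof -
  let ?f = "\<lambda>b. \<omega> b powr (2 - p) * blk_qnorm q (\<lambda>i. x i - z i) (Bl b) powr p"
  have "blk_qnorm q (\<lambda>i. x i - z i) (Bl b) = blk_qnorm q x (Bl b)"
    if "b \<in> {1..nB} - bsupp Bl nB z" for b
    using that by (intro blk_qnorm_cong) (auto simp: bsupp_def)
  then have "(\<Sum>b\<in>{1..nB} - bsupp Bl nB z. \<omega> b powr (2 - p) * blk_qnorm q x (Bl b) powr p)
      = sum ?f ({1..nB} - bsupp Bl nB z)" by simp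
  also have "\<dots> \<le> sum ?f {1..nB}" by (intro sum_mono2) auto
  finally show ?thesis
    unfolding wnorm_def using assms by (intro powr_mono2) (auto intro: sum_nonneg)
qed

lemma quasi_best_tail_le:
  assumes part: "is_block_partition N nB Bl"
    and \<omega>_ge: "\<forall>b\<in>{1..nB}. \<omega> b \<ge> 1"
    and "0 < p"
    and s_ge: "s \<ge> (winf nB \<omega>)\<^sup>2"
    and sorting: "sorting_perm Bl nB \<omega> q x \<pi>"
    and "T \<subseteq> {1..nB}" "wsize \<omega> T \<le> s"
  defines "term b \<equiv> \<omega> b powr (2 - p) * blk_qnorm q x (Bl b) powr p"
  shows "(\<Sum>b\<in>{1..nB} - S_t nB \<omega> \<pi> (3 * s). term b) \<le> (\<Sum>b\<in>{1..nB} - T. term b)"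
proof -
  let ?U = "{1..nB}" and ?k = "k_t nB \<omega> \<pi> (3 * s)" and ?S = "S_t nB \<omega> \<pi> (3 * s)"
  define ratio where "ratio b = blk_qnorm q x (Bl b) / \<omega> b" for b
  have bij: "bij_betw \<pi> ?U ?U" using sorting unfolding sorting_perm_def by simp
  have "s \<ge> 0" using s_ge zero_le_power2[of "winf nB \<omega>"] by linarith
  have SU: "?S \<subseteq> ?U" by (rule S_t_subset[OF bij]) (use \<open>s \<ge> 0\<close> in simp)
  have ratio_nonneg: "0 \<le> ratio b" and term_eq: "term b = (\<omega> b)\<^sup>2 * ratio b powr p"
    if "b \<in> ?U" for b
  proof -
    have "\<omega> b \<ge> 1" using that \<omega>_ge by blast
    moreover have "blk_qnorm q x (Bl b) \<ge> 0"
      by (rule blk_qnorm_nonneg[OF block_partition_blockD[OF part that]])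
    ultimately have "\<omega> b > 0" "blk_qnorm q x (Bl b) \<ge> 0" by simp_all
    then show "0 \<le> ratio b" "term b = (\<omega> b)\<^sup>2 * ratio b powr p"
      unfolding term_def ratio_def by (simp_all add: powr_weight_eq)
  qed
  show ?thesis
  proof (cases "?k = nB")
    case True
    then have "?S = ?U" using bij unfolding S_t_def bij_betw_def by simp
    then show ?thesis unfolding term_def by (simp add: sum_nonneg)
  next
    case False
    then have "?k < nB" using k_t_le[of "3 * s"] \<open>s \<ge> 0\<close> by (simp add: le_neq_implies_less)
    have "3 * s - (winf nB \<omega>)\<^sup>2 < wsize \<omega> ?S"
      by (rule wsize_S_t_gt[OF bij _ _ \<open>?k < nB\<close>]) (use \<open>s \<ge> 0\<close> \<omega>_ge in auto)
    moreover have "wsize \<omega> ?S \<le> wsize \<omega> (?S - T) + wsize \<omega> T"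
      using SU \<open>T \<subseteq> ?U\<close> by (intro wsize_le_diff_add) (auto intro: finite_subset)
    ultimately have weight: "wsize \<omega> T \<le> wsize \<omega> (?S - T)"
      using \<open>wsize \<omega> T \<le> s\<close> s_ge by linarith
    have "\<pi> (Suc ?k) \<in> ?U" using bij \<open>?k < nB\<close> unfolding bij_betw_def by auto
    have "(\<Sum>b\<in>?U - ?S. (\<omega> b)\<^sup>2 * ratio b powr p) \<le> (\<Sum>b\<in>?U - T. (\<omega> b)\<^sup>2 * ratio b powr p)"
    proof (rule sum_tail_le_exchange[OF _ SU \<open>T \<subseteq> ?U\<close>, where \<tau> = "ratio (\<pi> (Suc ?k)) powr p"])
      show "ratio (\<pi> (Suc ?k)) powr p \<le> ratio b powr p" if "b \<in> ?S" for b
        using that ratio_nonneg[OF \<open>\<pi> (Suc ?k) \<in> ?U\<close>] \<open>0 < p\<close>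
          sorting_perm_threshold(1)[OF sorting \<open>?k < nB\<close>, of b]
        unfolding ratio_def S_t_def by (intro powr_mono2) auto
      show "ratio b powr p \<le> ratio (\<pi> (Suc ?k)) powr p" if "b \<in> ?U - ?S" for b
        using that ratio_nonneg[of b] \<open>0 < p\<close> sorting_perm_threshold(2)[OF sorting \<open>?k < nB\<close>, of b]
        unfolding ratio_def S_t_def by (intro powr_mono2) auto
    qed (use weight in \<open>auto simp: wsize_def\<close>)
    then show ?thesis using term_eq by simp
  qed
qed

lemma sigma_qb_le_wnorm_diff:
  assumes part: "is_block_partition N nB Bl"
    and \<omega>_ge: "\<forall>b\<in>{1..nB}. \<omega> b \<ge> 1"
    and "1 \<le> q" "0 < p"
    and s_ge: "s \<ge> (winf nB \<omega>)\<^sup>2"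
    and sorting: "sorting_perm Bl nB \<omega> q x \<pi>"
    and "w0 Bl nB \<omega> z \<le> s"
  shows "sigma_qb Bl nB \<omega> q p \<pi> (3 * s) x \<le> wnorm Bl nB \<omega> q p (\<lambda>i. x i - z i)"
proof -
  let ?U = "{1..nB}" and ?S = "S_t nB \<omega> \<pi> (3 * s)" and ?T = "bsupp Bl nB z"
  let ?tail = "\<lambda>A. \<Sum>b\<in>?U - A. \<omega> b powr (2 - p) * blk_qnorm q x (Bl b) powr p"
  have "s \<ge> 0" using s_ge zero_le_power2[of "winf nB \<omega>"] by linarith
  have "bij_betw \<pi> ?U ?U" using sorting unfolding sorting_perm_def by simp
  then have "?S \<subseteq> ?U" using S_t_subset \<open>s \<ge> 0\<close> by simp
  then have "sigma_qb Bl nB \<omega> q p \<pi> (3 * s) x = ?tail ?S powr (1 / p)"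
    unfolding sigma_qb_def using wnorm_diff_restr part \<open>1 \<le> q\<close> by simp
  also have "\<dots> \<le> ?tail ?T powr (1 / p)"
  proof -
    have "?T \<subseteq> ?U" unfolding bsupp_def by auto
    then have "?tail ?S \<le> ?tail ?T"
      using quasi_best_tail_le[OF part \<omega>_ge \<open>0 < p\<close> s_ge sorting] \<open>w0 Bl nB \<omega> z \<le> s\<close>
      unfolding w0_def by blast
    then show ?thesis using \<open>0 < p\<close> by (intro powr_mono2) (simp_all add: sum_nonneg)
  qed
  also have "\<dots> \<le> wnorm Bl nB \<omega> q p (\<lambda>i. x i - z i)"
    using wnorm_diff_ge_tail \<open>0 < p\<close> by blast
  finally show ?thesis .
qed

theorem mainTheorem2:
  fixes N nB :: nat and Bl :: "nat \<Rightarrow> nat set" and \<omega> :: "nat \<Rightarrow> real"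
    and q :: ereal and p s :: real and x :: "nat \<Rightarrow> real" and \<pi> :: "nat \<Rightarrow> nat"
  assumes "is_block_partition N nB Bl"
    and "\<forall>b\<in>{1..nB}. \<omega> b \<ge> 1"
    and "1 \<le> q"
    and "0 < p" and "p \<le> 2"
    and "s \<ge> (winf nB \<omega>)\<^sup>2"
    and "sorting_perm Bl nB \<omega> q x \<pi>"
  shows "sigma_qb Bl nB \<omega> q p \<pi> (3 * s) x \<le> sigma_best Bl nB \<omega> q p s x"
proof -
  have "s \<ge> 0" using assms(6) zero_le_power2[of "winf nB \<omega>"] by linarith
  then have "w0 Bl nB \<omega> (\<lambda>i. 0) \<le> s" unfolding w0_def bsupp_def wsize_def by simp
  then have nonempty: "{wnorm Bl nB \<omega> q p (\<lambda>i. x i - z i) | z. w0 Bl nB \<omega> z \<le> s} \<noteq> {}"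
    by blast
  show ?thesis unfolding sigma_best_def
  proof (rule cInf_greatest[OF nonempty])
    fix y assume "y \<in> {wnorm Bl nB \<omega> q p (\<lambda>i. x i - z i) | z. w0 Bl nB \<omega> z \<le> s}"
    then obtain z where "w0 Bl nB \<omega> z \<le> s" "y = wnorm Bl nB \<omega> q p (\<lambda>i. x i - z i)" by blast
    then show "sigma_qb Bl nB \<omega> q p \<pi> (3 * s) x \<le> y"
      using sigma_qb_le_wnorm_diff[OF assms(1-4,6,7)] by simp
  qed
qed

end
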